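(* Let $P$ be an online minimization problem and let $R$ be a randomized algorithm with advice complexity $b(n)$. Suppose there is a function $I:\mathbb{N}\to\mathbb{N}$ such that the number of valid $P$-inputs of length $n$ is at most $I(n)$. Then for every $\varepsilon>0$ there exists a deterministic algorithm with advice $\mathrm{ALG}$ such that $\mathrm{ALG}(\sigma)\leq(1+\varepsilon)\mathbb{E}[R(\sigma)]$ for every input $\sigma$ and such that $\mathrm{ALG}$ reads at most $b(n)+O(\log n+\log\log I(n)+\log\varepsilon^{-1})$ bits of advice on inputs of length $n$. In particular, if $I(n)=2^{n^{O(1)}}$ and $\varepsilon>0$ is a fixed constant, then $\mathrm{ALG}$ reads $b(n)+O(\log n)$ bits of advice.
   Context: Online algorithms with advice read bits from an infinite advice tape prepared by an oracle that knows the whole input; the advice complexity $b(n)$ is the maximum number of bits read on inputs of length at most $n$. Costs are non-negative reals. A randomized algorithm with advice complexity $b(n)$ is a probability distribution over deterministic algorithms with advice complexity at most $b(n)$. *)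

theory Defs
  imports "HOL-Probability.Probability"
begin

text \<open>Requests have type 'r, answers type 'a.
  An online minimization problem is given by a set V of valid inputs and a
  cost function cost, where cost sigma ys is the (non-negative, real) cost of
  answering the input sigma with the answer sequence ys.\<close>

definition online_min_problem :: "'r list set \<Rightarrow> ('r list \<Rightarrow> 'a list \<Rightarrow> real) \<Rightarrow> bool" where
  "online_min_problem V cost \<longleftrightarrow>
     (\<forall>\<sigma>\<in>V. \<forall>ys. length ys = length \<sigma> \<longrightarrow> 0 \<le> cost \<sigma> ys)"

text \<open>A phi rho is the answer the algorithm gives to the last request of the
  prefix rho when the (infinite) advice tape is phi; it only sees the prefix,
  so the algorithm is online.  O sigma is the advice tape written by the
  oracle, which knows the whole input sigma.\<close>

type_synonym ('r, 'a) det_alg = "((nat \<Rightarrow> bool) \<Rightarrow> 'r list \<Rightarrow> 'a) \<times> ('r list \<Rightarrow> (nat \<Rightarrow> bool))"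

definition run :: "((nat \<Rightarrow> bool) \<Rightarrow> 'r list \<Rightarrow> 'a) \<Rightarrow> (nat \<Rightarrow> bool) \<Rightarrow> 'r list \<Rightarrow> 'a list" where
  "run A \<phi> \<sigma> = map (\<lambda>i. A \<phi> (take (Suc i) \<sigma>)) [0..<length \<sigma>]"

definition alg_output :: "('r, 'a) det_alg \<Rightarrow> 'r list \<Rightarrow> 'a list" where
  "alg_output D \<sigma> = run (fst D) (snd D \<sigma>) \<sigma>"

definition alg_cost :: "('r list \<Rightarrow> 'a list \<Rightarrow> real) \<Rightarrow> ('r, 'a) det_alg \<Rightarrow> 'r list \<Rightarrow> real" where
  "alg_cost cost D \<sigma> = cost \<sigma> (alg_output D \<sigma>)"

text \<open>D reads at most k bits of advice on input sigma: its behaviour on sigma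
  is determined by the first floor(k) bits of the oracle's tape (bits
  0, ..., floor(k)-1), i.e. any tape agreeing with the oracle's tape on those
  positions yields the same answers.\<close>

definition reads_at_most :: "('r, 'a) det_alg \<Rightarrow> 'r list \<Rightarrow> real \<Rightarrow> bool" where
  "reads_at_most D \<sigma> k \<longleftrightarrow>
     (\<forall>\<psi>. (\<forall>i. real (Suc i) \<le> k \<longrightarrow> \<psi> i = snd D \<sigma> i) \<longrightarrow> run (fst D) \<psi> \<sigma> = alg_output D \<sigma>)"

definition advice_complexity_le :: "'r list set \<Rightarrow> ('r, 'a) det_alg \<Rightarrow> (nat \<Rightarrow> real) \<Rightarrow> bool" where
  "advice_complexity_le V D b \<longleftrightarrow> (\<forall>\<sigma>\<in>V. \<forall>n. length \<sigma> \<le> n \<longrightarrow> reads_at_most D \<sigma> (b n))"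

definition rand_alg_with_advice :: "'r list set \<Rightarrow> ('r, 'a) det_alg measure \<Rightarrow> (nat \<Rightarrow> nat) \<Rightarrow> bool" where
  "rand_alg_with_advice V M b \<longleftrightarrow>
     prob_space M \<and> (\<forall>D\<in>space M. advice_complexity_le V D (\<lambda>n. real (b n)))"

definition expected_cost :: "('r list \<Rightarrow> 'a list \<Rightarrow> real) \<Rightarrow> ('r, 'a) det_alg measure \<Rightarrow> 'r list \<Rightarrow> ennreal" where
  "expected_cost cost M \<sigma> = (\<integral>\<^sup>+ D. ennreal (alg_cost cost D \<sigma>) \<partial>M)"

definition inputs_bounded_by :: "'r list set \<Rightarrow> (nat \<Rightarrow> nat) \<Rightarrow> bool" where
  "inputs_bounded_by V I \<longleftrightarrow>
     (\<forall>n. finite {\<sigma>\<in>V. length \<sigma> = n} \<and> card {\<sigma>\<in>V. length \<sigma> = n} \<le> I n)"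

end

theory Submission
  imports Defs "HOL-Library.Log_Nat"
begin

text \<open>By Markov's inequality, every input \<open>\<sigma>\<close> is served within a factor \<open>1 + \<epsilon>\<close> of the
  expected cost by a deterministic algorithm drawn from \<open>R\<close> with probability at least
  \<open>\<epsilon> / (1 + \<epsilon>)\<close>. By averaging, some deterministic algorithm is good for an \<open>\<epsilon> / (1 + \<epsilon>)\<close>
  fraction of any finite set of inputs, so greedily \<open>\<lceil>1/\<epsilon>\<rceil> \<lceil>log I(n)\<rceil>\<close> algorithms suffice
  to cover all inputs of length \<open>n\<close>. The oracle writes \<open>n\<close> and the index of a good algorithm
  in a self-delimiting binary code, \<open>O(log n + log log I(n) + log \<epsilon>\<^sup>-\<^sup>1)\<close> bits, followed by the
  advice of that algorithm.\<close>

lemma sum_bits_eq_mod: "(\<Sum>i<L. if odd (x div 2 ^ i) then 2 ^ i else 0) = x mod 2 ^ L"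
  for x :: nat
proof (induction L)
  case (Suc L)
  have "x mod 2 ^ Suc L = 2 ^ L * (x div 2 ^ L mod 2) + x mod 2 ^ L"
    using mod_mult2_eq[of x "2 ^ L" 2] by (simp only: power_Suc2)
  with Suc show ?case by (simp add: mod2_eq_if)
qed simp

text \<open>Self-delimiting code word of length \<open>2 * L + 1\<close> for \<open>x < 2 ^ L\<close>: flags at even positions
  (\<open>True\<close> = another bit follows), the bits of \<open>x\<close> at odd positions.\<close>

definition sd_code :: "nat \<Rightarrow> nat \<Rightarrow> nat \<Rightarrow> bool" where
  "sd_code L x r \<longleftrightarrow> r < 2 * L \<and> (even r \<or> odd (x div 2 ^ (r div 2)))"

definition sd_length :: "(nat \<Rightarrow> bool) \<Rightarrow> nat \<Rightarrow> nat" where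
  "sd_length \<phi> s = (LEAST i. \<not> \<phi> (s + 2 * i))"

definition sd_value :: "(nat \<Rightarrow> bool) \<Rightarrow> nat \<Rightarrow> nat" where
  "sd_value \<phi> s = (\<Sum>i<sd_length \<phi> s. if \<phi> (s + 2 * i + 1) then 2 ^ i else 0)"

definition sd_next :: "(nat \<Rightarrow> bool) \<Rightarrow> nat \<Rightarrow> nat" where
  "sd_next \<phi> s = s + 2 * sd_length \<phi> s + 1"

lemma sd_decode:
  assumes code: "\<And>r. r \<le> 2 * L \<Longrightarrow> \<phi> (s + r) = sd_code L x r" and x: "x < 2 ^ L"
  shows "sd_length \<phi> s = L" and "sd_value \<phi> s = x" and "sd_next \<phi> s = s + 2 * L + 1"
proof -
  show len: "sd_length \<phi> s = L"
    unfolding sd_length_def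
  proof (rule Least_equality)
    show "\<not> \<phi> (s + 2 * L)"
      using code[of "2 * L"] by (simp add: sd_code_def)
    show "L \<le> i" if "\<not> \<phi> (s + 2 * i)" for i
      using that code[of "2 * i"] by (force simp: sd_code_def)
  qed
  then show "sd_next \<phi> s = s + 2 * L + 1"
    by (simp add: sd_next_def)
  have "sd_value \<phi> s = (\<Sum>i<L. if odd (x div 2 ^ i) then 2 ^ i else 0)"
    unfolding sd_value_def len
    using code[of "2 * _ + 1"] by (intro sum.cong) (auto simp: sd_code_def add.assoc)
  also have "\<dots> = x"
    using x by (simp add: sum_bits_eq_mod)
  finally show "sd_value \<phi> s = x" .
qed

lemma less_two_power_ceillog2_Suc: "n < 2 ^ ceillog2 (Suc n)"
  using le_two_power_ceillog2[of "Suc n"] by simp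

definition header_len :: "nat \<Rightarrow> nat \<Rightarrow> nat" where
  "header_len n j = 2 * ceillog2 (Suc n) + 2 * ceillog2 (Suc j) + 2"

text \<open>The input length \<open>n\<close> is written on the tape because an online algorithm does not know
  it in advance; \<open>j\<close> is the index of the algorithm to simulate.\<close>

definition advice_tape :: "nat \<Rightarrow> nat \<Rightarrow> (nat \<Rightarrow> bool) \<Rightarrow> nat \<Rightarrow> bool" where
  "advice_tape n j adv i =
     (if i \<le> 2 * ceillog2 (Suc n) then sd_code (ceillog2 (Suc n)) n i
      else if i < header_len n j then sd_code (ceillog2 (Suc j)) j (i - (2 * ceillog2 (Suc n) + 1))
      else adv (i - header_len n j))"

definition tape_number :: "(nat \<Rightarrow> bool) \<Rightarrow> nat" where
  "tape_number \<phi> = sd_value \<phi> 0"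

definition tape_index :: "(nat \<Rightarrow> bool) \<Rightarrow> nat" where
  "tape_index \<phi> = sd_value \<phi> (sd_next \<phi> 0)"

definition tape_payload :: "(nat \<Rightarrow> bool) \<Rightarrow> nat \<Rightarrow> bool" where
  "tape_payload \<phi> i = \<phi> (sd_next \<phi> (sd_next \<phi> 0) + i)"

lemma advice_tape_decode:
  assumes agree: "\<And>i. i < header_len n j \<Longrightarrow> \<psi> i = advice_tape n j adv i"
  shows "tape_number \<psi> = n" and "tape_index \<psi> = j"
    and "tape_payload \<psi> = (\<lambda>i. \<psi> (header_len n j + i))"
proof -
  define L1 L2 where "L1 = ceillog2 (Suc n)" and "L2 = ceillog2 (Suc j)"
  have "\<psi> (0 + r) = sd_code L1 n r" if "r \<le> 2 * L1" for r
    using agree[of r] that by (simp add: advice_tape_def header_len_def L1_def)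
  note first = sd_decode[OF this less_two_power_ceillog2_Suc[of n, folded L1_def]]
  have "\<psi> (sd_next \<psi> 0 + r) = sd_code L2 j r" if "r \<le> 2 * L2" for r
    using agree[of "2 * L1 + 1 + r"] that first(3)
    by (simp add: advice_tape_def header_len_def L1_def L2_def)
  note second = sd_decode[OF this less_two_power_ceillog2_Suc[of j, folded L2_def]]
  show "tape_number \<psi> = n" "tape_index \<psi> = j"
    using first second by (simp_all add: tape_number_def tape_index_def)
  show "tape_payload \<psi> = (\<lambda>i. \<psi> (header_len n j + i))"
    using first second by (simp add: fun_eq_iff tape_payload_def header_len_def L1_def L2_def)
qed

lemma advice_tape_payload: "advice_tape n j adv (header_len n j + i) = adv i"
  by (simp add: advice_tape_def header_len_def)

definition select_alg :: "(nat \<Rightarrow> ('r, 'a) det_alg list) \<Rightarrow> (nat \<Rightarrow> bool) \<Rightarrow> 'r list \<Rightarrow> 'a" where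
  "select_alg ds \<phi> = fst (ds (tape_number \<phi>) ! tape_index \<phi>) (tape_payload \<phi>)"

definition select_oracle ::
    "(nat \<Rightarrow> ('r, 'a) det_alg list) \<Rightarrow> ('r list \<Rightarrow> nat) \<Rightarrow> 'r list \<Rightarrow> nat \<Rightarrow> bool" where
  "select_oracle ds js \<sigma> = advice_tape (length \<sigma>) (js \<sigma>) (snd (ds (length \<sigma>) ! js \<sigma>) \<sigma>)"

lemma run_select_alg:
  assumes reads: "reads_at_most (ds (length \<sigma>) ! js \<sigma>) \<sigma> (real k)"
    and agree: "\<And>i. i < header_len (length \<sigma>) (js \<sigma>) + k \<Longrightarrow> \<psi> i = select_oracle ds js \<sigma> i"
  shows "run (select_alg ds) \<psi> \<sigma> = alg_output (ds (length \<sigma>) ! js \<sigma>) \<sigma>"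
proof -
  define D H where "D = ds (length \<sigma>) ! js \<sigma>" and "H = header_len (length \<sigma>) (js \<sigma>)"
  have "\<psi> i = advice_tape (length \<sigma>) (js \<sigma>) (snd D \<sigma>) i" if "i < H" for i
    using agree[of i] that by (simp add: select_oracle_def D_def H_def)
  note decode = advice_tape_decode[OF this[unfolded H_def]]
  have "run (select_alg ds) \<psi> \<sigma> = run (fst D) (\<lambda>i. \<psi> (H + i)) \<sigma>"
    by (simp add: run_def select_alg_def decode D_def H_def)
  also have "\<dots> = alg_output D \<sigma>"
    using reads agree[of "H + _"] unfolding reads_at_most_def D_def H_def
    by (simp add: select_oracle_def advice_tape_payload)
  finally show ?thesis
    by (simp add: D_def)
qed

lemma reads_at_most_select_alg:
  assumes "reads_at_most (ds (length \<sigma>) ! js \<sigma>) \<sigma> (real k)"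
  shows "alg_output (select_alg ds, select_oracle ds js) \<sigma> = alg_output (ds (length \<sigma>) ! js \<sigma>) \<sigma>"
    and "reads_at_most (select_alg ds, select_oracle ds js) \<sigma> (real (header_len (length \<sigma>) (js \<sigma>) + k))"
proof -
  show same_output: "alg_output (select_alg ds, select_oracle ds js) \<sigma> = alg_output (ds (length \<sigma>) ! js \<sigma>) \<sigma>"
    using run_select_alg[where ds = ds and js = js, OF assms] by (simp add: alg_output_def)
  show "reads_at_most (select_alg ds, select_oracle ds js) \<sigma> (real (header_len (length \<sigma>) (js \<sigma>) + k))"
    unfolding reads_at_most_def same_output using run_select_alg[where ds = ds and js = js, OF assms] by simp
qed

lemma (in prob_space) prob_le_mult_nn_integral:
  fixes f :: "'a \<Rightarrow> ennreal"
  assumes f: "f \<in> borel_measurable M" and c: "0 < c"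
  shows "1 - 1 / c \<le> prob {x\<in>space M. f x \<le> ennreal c * (\<integral>\<^sup>+x. f x \<partial>M)}"
proof -
  define E where "E = (\<integral>\<^sup>+x. f x \<partial>M)"
  define B where "B = {x\<in>space M. ennreal c * E < f x}"
  have B: "B \<in> events"
    unfolding B_def using f by measurable
  have "prob B \<le> 1 / c"
  proof (cases E rule: ennreal_cases)
    case top
    then have "B = {}"
      using c by (simp add: B_def ennreal_mult_top)
    then show ?thesis
      using c by simp
  next
    case (real r)
    show ?thesis
    proof (cases "r = 0")
      case True
      then have "AE x in M. f x = 0"
        using f real True by (simp add: E_def nn_integral_0_iff_AE)
      then have "AE x in M. x \<notin> B"
        by eventually_elim (simp add: B_def)
      then have "emeasure M {x\<in>space M. x \<in> B} = 0"
        by (rule emeasure_eq_0_AE)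
      moreover have "{x\<in>space M. x \<in> B} = B"
        using sets.sets_into_space[OF B] by auto
      ultimately have "prob B = 0"
        by (simp add: measure_def)
      then show ?thesis
        using c by simp
    next
      case False
      have "ennreal c * E * emeasure M B = (\<integral>\<^sup>+x. ennreal c * E * indicator B x \<partial>M)"
        using B by (simp add: nn_integral_cmult_indicator)
      also have "\<dots> \<le> E"
        unfolding E_def by (intro nn_integral_mono) (auto simp: B_def E_def indicator_def less_imp_le)
      finally have "ennreal (c * r * prob B) \<le> ennreal r"
        using c real by (simp add: emeasure_eq_measure ennreal_mult)
      then have "r * (c * prob B) \<le> r * 1"
        using real by (simp add: ac_simps)
      then have "c * prob B \<le> 1"
        using real False by (simp add: mult_le_cancel_left_pos)
      then show ?thesis
        using c by (simp add: pos_le_divide_eq mult.commute)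
    qed
  qed
  moreover have "{x\<in>space M. f x \<le> ennreal c * E} = space M - B"
    by (auto simp: B_def not_less)
  ultimately show ?thesis
    using prob_compl[OF B] by (simp add: E_def)
qed

lemma (in prob_space) exists_in_many_events:
  assumes T: "finite T" and G: "\<And>s. s \<in> T \<Longrightarrow> G s \<in> events" "\<And>s. s \<in> T \<Longrightarrow> p \<le> prob (G s)"
  shows "\<exists>x\<in>space M. p * card T \<le> card {s\<in>T. x \<in> G s}"
proof -
  define count where "count x = real (card {s\<in>T. x \<in> G s})" for x
  have count_eq: "count x = (\<Sum>s\<in>T. indicator (G s) x)" for x
    using T by (simp add: count_def indicator_def sum.If_cases Int_def)
  have integrable: "integrable M count"
    unfolding count_eq using G by (intro Bochner_Integration.integrable_sum integrable_real_indicator)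
      (auto simp: less_top[symmetric])
  have finite: "finite (count ` space M)"
    by (rule finite_subset[of _ "real ` {..card T}"]) (auto simp: count_def intro: card_mono T)
  then have "Max (count ` space M) \<in> count ` space M"
    using not_empty by (intro Max_in) auto
  then obtain x where x: "x \<in> space M" "count x = Max (count ` space M)"
    by (metis imageE)
  have max: "count y \<le> count x" if "y \<in> space M" for y
    unfolding x(2) by (intro Max_ge finite imageI that)
  have "p * card T = (\<Sum>s\<in>T. p)"
    by simp
  also have "\<dots> \<le> (\<Sum>s\<in>T. prob (G s))"
    using G by (intro sum_mono) auto
  also have "\<dots> = expectation count"
    unfolding count_eq using G
    by (subst Bochner_Integration.integral_sum) (auto simp: less_top[symmetric])
  also have "\<dots> \<le> count x"
    using max by (intro integral_le_const integrable) auto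
  finally show ?thesis
    using x(1) unfolding count_def by blast
qed

lemma (in prob_space) greedy_cover:
  assumes "finite T" "\<And>s. s \<in> T \<Longrightarrow> G s \<in> events" "\<And>s. s \<in> T \<Longrightarrow> p \<le> prob (G s)"
    and "(1 - p) ^ h * card T < 1"
  shows "\<exists>xs. set xs \<subseteq> space M \<and> length xs \<le> h \<and> (\<forall>s\<in>T. \<exists>x\<in>set xs. x \<in> G s)"
  using assms
proof (induction h arbitrary: T)
  case 0
  then show ?case
    by (intro exI[of _ "[]"]) auto
next
  case (Suc h)
  show ?case
  proof (cases "T = {}")
    case True
    then show ?thesis
      by (intro exI[of _ "[]"]) auto
  next
    case False
    then obtain s where "s \<in> T"
      by blast
    then have "p \<le> 1"
      using Suc.prems(3)[of s] by (meson order.trans prob_le_1)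
    obtain x where x: "x \<in> space M" and many: "p * card T \<le> card {s\<in>T. x \<in> G s}"
      using exists_in_many_events[of T G p] Suc.prems by blast
    define T' where "T' = {s\<in>T. x \<notin> G s}"
    have "card ({s\<in>T. x \<in> G s} \<union> T') = card {s\<in>T. x \<in> G s} + card T'"
      using Suc.prems(1) by (intro card_Un_disjoint) (auto simp: T'_def)
    moreover have "{s\<in>T. x \<in> G s} \<union> T' = T"
      by (auto simp: T'_def)
    ultimately have "card T' \<le> (1 - p) * card T"
      using many by (simp add: algebra_simps)
    then have "(1 - p) ^ h * card T' \<le> (1 - p) ^ h * ((1 - p) * card T)"
      using \<open>p \<le> 1\<close> by (intro mult_left_mono) auto
    also have "\<dots> < 1"
      using Suc.prems(4) by (simp add: mult.left_commute)
    finally obtain xs where "set xs \<subseteq> space M" "length xs \<le> h" "\<forall>s\<in>T'. \<exists>x\<in>set xs. x \<in> G s"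
      using Suc.IH[of T'] Suc.prems(1-3) by (auto simp: T'_def)
    then show ?thesis
      using x by (intro exI[of _ "x # xs"]) (auto simp: T'_def)
  qed
qed

lemma (in prob_space) exists_short_cover:
  assumes "finite T" "card T \<le> N" "0 < \<epsilon>"
    and "\<And>s. s \<in> T \<Longrightarrow> G s \<in> events" "\<And>s. s \<in> T \<Longrightarrow> 1 - 1 / (1 + \<epsilon>) \<le> prob (G s)"
  shows "\<exists>xs. set xs \<subseteq> space M \<and> length xs \<le> nat \<lceil>1 / \<epsilon>\<rceil> * ceillog2 (Suc N)
    \<and> (\<forall>s\<in>T. \<exists>x\<in>set xs. x \<in> G s)"
proof (rule greedy_cover)
  define q t where "q = nat \<lceil>1 / \<epsilon>\<rceil>" and "t = ceillog2 (Suc N)"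
  have "1 \<le> real q * \<epsilon>"
    using \<open>0 < \<epsilon>\<close> by (simp add: q_def pos_divide_le_eq[symmetric])
  moreover have "1 + real q * \<epsilon> \<le> (1 + \<epsilon>) ^ q"
    using \<open>0 < \<epsilon>\<close> by (intro Bernoulli_inequality) simp
  ultimately have "2 ^ t \<le> ((1 + \<epsilon>) ^ q) ^ t"
    by (intro power_mono) auto
  moreover have "real (card T) < 2 ^ t"
    using \<open>card T \<le> N\<close> less_two_power_ceillog2_Suc[of N] unfolding t_def
    by (metis of_nat_less_iff of_nat_numeral of_nat_power order.strict_trans1)
  ultimately have "real (card T) < (1 + \<epsilon>) ^ (q * t)"
    unfolding power_mult by linarith
  then show "(1 - (1 - 1 / (1 + \<epsilon>))) ^ (q * t) * card T < 1"
    using \<open>0 < \<epsilon>\<close> by (simp add: power_one_over)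
qed (use assms in auto)

lemma ceillog2_Suc_less: "real (ceillog2 (Suc n)) < log 2 (real n + 2) + 1"
proof -
  have "log 2 (real (Suc n)) \<le> log 2 (real n + 2)"
    by (intro log_mono) auto
  then show ?thesis
    using ceillog2_less_log[of "Suc n"] by linarith
qed

lemma header_len_le:
  assumes j: "j < nat \<lceil>1 / \<epsilon>\<rceil> * ceillog2 (Suc N)" and "0 < \<epsilon>"
  shows "real (header_len n j)
    \<le> 8 * (log 2 (real n + 2) + log 2 (log 2 (real N + 2)) + log 2 (1 / \<epsilon> + 2))"
proof -
  define q t where "q = nat \<lceil>1 / \<epsilon>\<rceil>" and "t = ceillog2 (Suc N)"
  define a c d where "a = log 2 (real n + 2)" and "c = log 2 (1 / \<epsilon> + 2)"
    and "d = log 2 (log 2 (real N + 2))"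
  have "1 \<le> a" "0 \<le> d"
    by (simp_all add: a_def d_def)
  have "1 \<le> c"
    using \<open>0 < \<epsilon>\<close> unfolding c_def by (subst le_log_iff) (auto simp: add_pos_pos)
  have "0 < q * t"
    using j unfolding q_def[symmetric] t_def[symmetric] by linarith
  then have "0 < q" "0 < t"
    by simp_all
  have n: "real (ceillog2 (Suc n)) < a + 1"
    using ceillog2_Suc_less[of n] unfolding a_def .
  have "log 2 q \<le> c"
    using \<open>0 < q\<close> \<open>0 < \<epsilon>\<close> unfolding c_def q_def by (intro log_mono) (auto, linarith)
  moreover have "log 2 t \<le> 1 + d"
  proof -
    have "1 \<le> log 2 (real N + 2)"
      by simp
    then have N: "log 2 (real N + 2) \<noteq> 0"
      by linarith
    have "real t < log 2 (real N + 2) + 1"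
      using ceillog2_Suc_less[of N] unfolding t_def .
    also have "\<dots> \<le> 2 * log 2 (real N + 2)"
      by simp
    finally have "log 2 t \<le> log 2 (2 * log 2 (real N + 2))"
      using \<open>0 < t\<close> by (intro log_mono) auto
    also have "\<dots> = 1 + d"
      unfolding d_def by (simp add: log_mult N)
    finally show ?thesis .
  qed
  moreover have "ceillog2 (Suc j) \<le> ceillog2 (q * t)"
    using j by (intro ceillog2_mono) (simp add: q_def t_def)
  moreover have "real (ceillog2 (q * t)) < log 2 q + log 2 t + 1"
    using ceillog2_less_log[of "q * t"] \<open>0 < q\<close> \<open>0 < t\<close> by (simp add: log_mult)
  ultimately have "real (ceillog2 (Suc j)) < 2 + c + d"
    by linarith
  with n \<open>1 \<le> a\<close> \<open>1 \<le> c\<close> \<open>0 \<le> d\<close> show ?thesis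
    unfolding header_len_def a_def [symmetric] c_def [symmetric] d_def [symmetric] by simp
qed

lemma reads_at_most_mono: "reads_at_most D \<sigma> k \<Longrightarrow> k \<le> k' \<Longrightarrow> reads_at_most D \<sigma> k'"
  unfolding reads_at_most_def by (meson order.trans)

lemma derandomize_with_advice:
  assumes R: "rand_alg_with_advice V M b"
    and meas: "\<forall>\<sigma>\<in>V. (\<lambda>D. alg_cost cost D \<sigma>) \<in> borel_measurable M"
    and I: "inputs_bounded_by V I" and "0 < \<epsilon>"
  shows "\<exists>ALG. (\<forall>\<sigma>\<in>V. ennreal (alg_cost cost ALG \<sigma>) \<le> ennreal (1 + \<epsilon>) * expected_cost cost M \<sigma>)
    \<and> (\<forall>\<sigma>\<in>V. reads_at_most ALG \<sigma> (real (b (length \<sigma>)) + 8 * (log 2 (real (length \<sigma>) + 2)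
          + log 2 (log 2 (real (I (length \<sigma>)) + 2)) + log 2 (1 / \<epsilon> + 2))))"
proof -
  interpret prob_space M
    using R by (simp add: rand_alg_with_advice_def)
  define good where
    "good \<sigma> = {D\<in>space M. ennreal (alg_cost cost D \<sigma>) \<le> ennreal (1 + \<epsilon>) * expected_cost cost M \<sigma>}"
    for \<sigma>
  have good: "good \<sigma> \<in> events" "1 - 1 / (1 + \<epsilon>) \<le> prob (good \<sigma>)" if "\<sigma> \<in> V" for \<sigma>
  proof -
    have "(\<lambda>D. ennreal (alg_cost cost D \<sigma>)) \<in> borel_measurable M"
      using meas that measurable_compose[OF _ measurable_ennreal] by blast
    then show "good \<sigma> \<in> events" "1 - 1 / (1 + \<epsilon>) \<le> prob (good \<sigma>)"
      using prob_le_mult_nn_integral[of _ "1 + \<epsilon>"] \<open>0 < \<epsilon>\<close>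
      unfolding good_def expected_cost_def by (measurable, simp)
  qed
  define h where "h n = nat \<lceil>1 / \<epsilon>\<rceil> * ceillog2 (Suc (I n))" for n
  have covers: "\<forall>n. \<exists>ds. set ds \<subseteq> space M \<and> length ds \<le> h n
      \<and> (\<forall>\<sigma>\<in>{\<sigma>\<in>V. length \<sigma> = n}. \<exists>D\<in>set ds. D \<in> good \<sigma>)"
    using I good \<open>0 < \<epsilon>\<close> unfolding h_def inputs_bounded_by_def by (intro allI exists_short_cover) auto
  obtain ds where ds: "\<forall>n. set (ds n) \<subseteq> space M \<and> length (ds n) \<le> h n
      \<and> (\<forall>\<sigma>\<in>{\<sigma>\<in>V. length \<sigma> = n}. \<exists>D\<in>set (ds n). D \<in> good \<sigma>)"
    using choice[OF covers] by blast
  have "\<forall>\<sigma>\<in>V. \<exists>j. j < length (ds (length \<sigma>)) \<and> ds (length \<sigma>) ! j \<in> good \<sigma>"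
    using ds by (metis (mono_tags, lifting) in_set_conv_nth mem_Collect_eq)
  then obtain js where js: "\<forall>\<sigma>\<in>V. js \<sigma> < length (ds (length \<sigma>)) \<and> ds (length \<sigma>) ! js \<sigma> \<in> good \<sigma>"
    by (rule bchoice[THEN exE])
  show ?thesis
  proof (intro exI[of _ "(select_alg ds, select_oracle ds js)"] conjI ballI)
    fix \<sigma> assume "\<sigma> \<in> V"
    have "ds (length \<sigma>) ! js \<sigma> \<in> space M"
      using ds js \<open>\<sigma> \<in> V\<close> by (meson nth_mem subsetD)
    then have "reads_at_most (ds (length \<sigma>) ! js \<sigma>) \<sigma> (real (b (length \<sigma>)))"
      using R \<open>\<sigma> \<in> V\<close> by (simp add: rand_alg_with_advice_def advice_complexity_le_def)
    note select = reads_at_most_select_alg[where ds = ds and js = js, OF this]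
    show "ennreal (alg_cost cost (select_alg ds, select_oracle ds js) \<sigma>) \<le> ennreal (1 + \<epsilon>) * expected_cost cost M \<sigma>"
      using js \<open>\<sigma> \<in> V\<close> by (simp add: alg_cost_def select(1) good_def)
    have "js \<sigma> < h (length \<sigma>)"
      using js ds \<open>\<sigma> \<in> V\<close> by (meson order_less_le_trans)
    then have "real (header_len (length \<sigma>) (js \<sigma>)) \<le> 8 * (log 2 (real (length \<sigma>) + 2)
          + log 2 (log 2 (real (I (length \<sigma>)) + 2)) + log 2 (1 / \<epsilon> + 2))"
      using \<open>0 < \<epsilon>\<close> unfolding h_def by (rule header_len_le)
    then show "reads_at_most (select_alg ds, select_oracle ds js) \<sigma> (real (b (length \<sigma>)) + 8 * (log 2 (real (length \<sigma>) + 2)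
          + log 2 (log 2 (real (I (length \<sigma>)) + 2)) + log 2 (1 / \<epsilon> + 2)))"
      by (intro reads_at_most_mono[OF select(2)]) simp
  qed
qed

lemma power_plus_two_le: "x ^ k + 2 \<le> (x + 2) ^ (k + 2)" if "0 \<le> x" for x :: real
proof -
  have "x ^ k \<le> (x + 2) ^ k" "1 \<le> (x + 2) ^ k"
    using that by (auto intro: power_mono one_le_power)
  moreover have "4 \<le> (x + 2) ^ 2"
    using that by (simp add: power2_eq_square algebra_simps)
  moreover have "(x + 2) ^ k * 4 \<le> (x + 2) ^ k * (x + 2) ^ 2"
    using calculation(3) that by (intro mult_left_mono) auto
  ultimately have "x ^ k + 2 \<le> (x + 2) ^ k * (x + 2) ^ 2"
    by linarith
  then show ?thesis
    by (simp only: power_add)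
qed

lemma log_log_le_of_exp_poly:
  assumes growth: "\<forall>n\<ge>N. real (I n) \<le> 2 powr (real n ^ k)"
  shows "\<exists>K\<ge>0. \<forall>n. log 2 (log 2 (real (I n) + 2)) \<le> K + real (k + 2) * log 2 (real n + 2)"
proof (intro exI conjI allI)
  have loglog_nonneg: "0 \<le> log 2 (log 2 (real m + 2))" for m
    by (subst zero_le_log_cancel_iff) auto
  define K where "K = (\<Sum>m<N. log 2 (log 2 (real (I m) + 2)))"
  show "0 \<le> K"
    unfolding K_def by (intro sum_nonneg loglog_nonneg)
  fix n
  have pos: "0 \<le> real (k + 2) * log 2 (real n + 2)"
    by simp
  have small: "log 2 (log 2 (real (I n) + 2)) \<le> K" if "n < N"
    unfolding K_def using that by (intro member_le_sum loglog_nonneg) auto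
  have large: "log 2 (log 2 (real (I n) + 2)) \<le> real (k + 2) * log 2 (real n + 2)" if "N \<le> n"
  proof -
    have "real (I n) + 2 \<le> 2 powr (real n ^ k + 2)"
      using growth that ge_one_powr_ge_zero[of 2 "real n ^ k"] by (auto simp: powr_add)
    then have "log 2 (real (I n) + 2) \<le> real n ^ k + 2"
      by (subst log_le_iff) auto
    then have "log 2 (log 2 (real (I n) + 2)) \<le> log 2 ((real n + 2) ^ (k + 2))"
      using power_plus_two_le[of "real n" k] by (intro log_mono) auto
    also have "\<dots> = real (k + 2) * log 2 (real n + 2)"
      by (rule log_nat_power) simp
    finally show ?thesis .
  qed
  show "log 2 (log 2 (real (I n) + 2)) \<le> K + real (k + 2) * log 2 (real n + 2)"
  proof (cases "n < N")
    case True
    then show ?thesis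
      using small pos by linarith
  next
    case False
    then show ?thesis
      using large \<open>0 \<le> K\<close> by simp
  qed
qed

lemma derandomize_with_log_advice:
  assumes R: "rand_alg_with_advice V M b"
    and meas: "\<forall>\<sigma>\<in>V. (\<lambda>D. alg_cost cost D \<sigma>) \<in> borel_measurable M"
    and I: "inputs_bounded_by V I" and "0 < \<epsilon>"
    and growth: "\<forall>n\<ge>N. real (I n) \<le> 2 powr (real n ^ k)"
  shows "\<exists>ALG. (\<forall>\<sigma>\<in>V. ennreal (alg_cost cost ALG \<sigma>) \<le> ennreal (1 + \<epsilon>) * expected_cost cost M \<sigma>)
    \<and> (\<exists>C. \<forall>\<sigma>\<in>V. reads_at_most ALG \<sigma> (real (b (length \<sigma>)) + C * log 2 (real (length \<sigma>) + 2)))"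
proof -
  obtain ALG where cost: "\<forall>\<sigma>\<in>V. ennreal (alg_cost cost ALG \<sigma>) \<le> ennreal (1 + \<epsilon>) * expected_cost cost M \<sigma>"
    and reads: "\<forall>\<sigma>\<in>V. reads_at_most ALG \<sigma> (real (b (length \<sigma>)) + 8 * (log 2 (real (length \<sigma>) + 2)
          + log 2 (log 2 (real (I (length \<sigma>)) + 2)) + log 2 (1 / \<epsilon> + 2)))"
    using derandomize_with_advice[OF R meas I \<open>0 < \<epsilon>\<close>] by blast
  obtain K where "0 \<le> K" and K: "\<And>n. log 2 (log 2 (real (I n) + 2)) \<le> K + real (k + 2) * log 2 (real n + 2)"
    using log_log_le_of_exp_poly[OF growth] by blast
  define c where "c = log 2 (1 / \<epsilon> + 2)"
  have "1 \<le> c"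
    using \<open>0 < \<epsilon>\<close> unfolding c_def by (subst le_log_iff) (auto simp: add_pos_pos)
  have "reads_at_most ALG \<sigma> (real (b (length \<sigma>)) + 8 * (1 + K + real (k + 2) + c) * log 2 (real (length \<sigma>) + 2))"
    if "\<sigma> \<in> V" for \<sigma>
  proof (rule reads_at_most_mono[OF reads[rule_format, OF that]])
    define a where "a = log 2 (real (length \<sigma>) + 2)"
    have "1 \<le> a"
      by (simp add: a_def)
    then have "K \<le> K * a" "c \<le> c * a"
      using \<open>0 \<le> K\<close> \<open>1 \<le> c\<close> by (simp_all add: mult_le_cancel_left1)
    then show "real (b (length \<sigma>)) + 8 * (log 2 (real (length \<sigma>) + 2)
          + log 2 (log 2 (real (I (length \<sigma>)) + 2)) + log 2 (1 / \<epsilon> + 2))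
        \<le> real (b (length \<sigma>)) + 8 * (1 + K + real (k + 2) + c) * log 2 (real (length \<sigma>) + 2)"
      using K[of "length \<sigma>"] unfolding a_def[symmetric] c_def[symmetric] by (simp add: algebra_simps)
  qed
  with cost show ?thesis
    by blast
qed

theorem theorem16:
  shows
  "(\<exists>C::real. \<forall>(V::'r list set) (cost::'r list \<Rightarrow> 'a list \<Rightarrow> real)
        (M::('r,'a) det_alg measure) (b::nat \<Rightarrow> nat) (I::nat \<Rightarrow> nat) (\<epsilon>::real).
      online_min_problem V cost \<and> rand_alg_with_advice V M b
      \<and> (\<forall>\<sigma>\<in>V. (\<lambda>D. alg_cost cost D \<sigma>) \<in> borel_measurable M)
      \<and> inputs_bounded_by V I \<and> \<epsilon> > 0 \<longrightarrow>
      (\<exists>ALG::('r,'a) det_alg.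
         (\<forall>\<sigma>\<in>V. ennreal (alg_cost cost ALG \<sigma>) \<le> ennreal (1 + \<epsilon>) * expected_cost cost M \<sigma>)
       \<and> (\<forall>\<sigma>\<in>V. reads_at_most ALG \<sigma>
             (real (b (length \<sigma>)) + C * (log 2 (real (length \<sigma>) + 2)
                + log 2 (log 2 (real (I (length \<sigma>)) + 2)) + log 2 (1 / \<epsilon> + 2))))))
   \<and>
   (\<forall>(V::'r list set) (cost::'r list \<Rightarrow> 'a list \<Rightarrow> real)
        (M::('r,'a) det_alg measure) (b::nat \<Rightarrow> nat) (I::nat \<Rightarrow> nat) (\<epsilon>::real).
      online_min_problem V cost \<and> rand_alg_with_advice V M b
      \<and> (\<forall>\<sigma>\<in>V. (\<lambda>D. alg_cost cost D \<sigma>) \<in> borel_measurable M)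
      \<and> inputs_bounded_by V I \<and> \<epsilon> > 0
      \<and> (\<exists>k::nat. \<exists>N::nat. \<forall>n\<ge>N. real (I n) \<le> 2 powr (real n ^ k)) \<longrightarrow>
      (\<exists>ALG::('r,'a) det_alg.
         (\<forall>\<sigma>\<in>V. ennreal (alg_cost cost ALG \<sigma>) \<le> ennreal (1 + \<epsilon>) * expected_cost cost M \<sigma>)
       \<and> (\<exists>C::real. \<forall>\<sigma>\<in>V. reads_at_most ALG \<sigma>
             (real (b (length \<sigma>)) + C * log 2 (real (length \<sigma>) + 2)))))"
  by (intro conjI exI[of _ 8] allI impI; elim conjE exE)
    (blast intro: derandomize_with_advice derandomize_with_log_advice)+

end
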